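(* For every graph $G$ and every $k\in\mathbb{N}$: if $\delta^{\infty}_{\rm e}(G)\leq k$, then $G\in\mathcal{A}_k^{(\leq k)}$. Conversely, for every $k\in\mathbb{N}_{\geq1}$, every graph $G\in\mathcal{A}_k^{(\leq k)}$ satisfies $\delta^{\infty}_{\rm e}(G)\leq 2k-1$.
   Context: All graphs are finite, undirected, loopless, and may have parallel edges; $\deg_G(v)$ is the number of edges incident to $v$ (counted with multiplicity), $E_G(v)$ the multiset of these edges. $\delta^{\infty}_{\rm e}(G)$ (edge-admissibility) is the minimum, over all linear orderings $\langle v_1,\dots,v_n\rangle$ of $V(G)$, of $\max_i \lambda_i$, where $\lambda_i$ is the minimum number of edges whose removal destroys all paths from $v_i$ to $\{v_1,\dots,v_{i-1}\}$ ($\lambda_1=0$); equivalently the maximum number of pairwise edge-disjoint paths from $v_i$ to $\{v_1,\dots,v_{i-1}\}$. Edge sums: let $G_1,G_2$ be disjoint graphs, $v_1\in V(G_1)$, $v_2\in V(G_2)$ with $\deg_{G_1}(v_1)=\deg_{G_2}(v_2)=k'$, and $\sigma:E_{G_1}(v_1)\to E_{G_2}(v_2)$ a bijection. The $k'$-edge sum of $G_1$ and $G_2$ on $v_1,v_2$ w.r.t. $\sigma$ is obtained from the disjoint union by deleting $v_1$ and $v_2$ and, for each edge $e=v_1x\in E_{G_1}(v_1)$ with $\sigma(e)=v_2y$, adding a new edge $xy$. A graph is a $(\leq k)$-edge sum of $G_1$ and $G_2$ if it is their disjoint union or a $k'$-edge sum of them for some $k'\in\{1,\dots,k\}$ and some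 choice of $v_1,v_2,\sigma$. $\mathcal{A}_k$ is the class of graphs in which all vertices except possibly one have degree at most $k$. $\mathcal{A}_k^{(\leq k)}$ is the smallest class of graphs containing $\mathcal{A}_k$ and containing every $(\leq k)$-edge sum of any two of its members. *)

theory Defs
  imports Main "HOL-Library.Multiset" "HOL-Library.Uprod"
begin

text \<open>A finite loopless multigraph is given by a finite vertex set V and a
multiset E of unordered pairs of distinct vertices of V (parallel edges =
multiplicities).\<close>

definition mgraph :: "'a set \<Rightarrow> 'a uprod multiset \<Rightarrow> bool" where
  "mgraph V E \<longleftrightarrow> finite V \<and> (\<forall>e\<in>#E. proper_uprod e \<and> set_uprod e \<subseteq> V)"

definition inc_edges :: "'a uprod multiset \<Rightarrow> 'a \<Rightarrow> 'a uprod multiset" where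
  "inc_edges E v = filter_mset (\<lambda>e. v \<in> set_uprod e) E"

definition deg :: "'a uprod multiset \<Rightarrow> 'a \<Rightarrow> nat" where
  "deg E v = size (inc_edges E v)"

definition other_end :: "'a \<Rightarrow> 'a uprod \<Rightarrow> 'a" where
  "other_end v e = (THE x. e = Upair v x)"

definition adj :: "'a uprod multiset \<Rightarrow> 'a \<Rightarrow> 'a \<Rightarrow> bool" where
  "adj E x y \<longleftrightarrow> Upair x y \<in># E"

definition edge_cut_num :: "'a uprod multiset \<Rightarrow> 'a \<Rightarrow> 'a set \<Rightarrow> nat" where
  "edge_cut_num E v S =
     (LEAST n. \<exists>F. F \<subseteq># E \<and> size F = n \<and> \<not> (\<exists>s\<in>S. (adj (E - F))\<^sup>*\<^sup>* v s))"

definition order_cost :: "'a uprod multiset \<Rightarrow> 'a list \<Rightarrow> nat" where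
  "order_cost E vs =
     Max (insert 0 {edge_cut_num E (vs ! i) (set (take i vs)) | i. i < length vs})"

definition edge_adm :: "'a set \<Rightarrow> 'a uprod multiset \<Rightarrow> nat" where
  "edge_adm V E = Min {order_cost E vs | vs. distinct vs \<and> set vs = V}"

definition in_A :: "nat \<Rightarrow> 'a set \<Rightarrow> 'a uprod multiset \<Rightarrow> bool" where
  "in_A k V E \<longleftrightarrow> mgraph V E \<and> (\<exists>u. \<forall>v\<in>V. v \<noteq> u \<longrightarrow> deg E v \<le> k)"

text \<open>A bijection sigma between E_{G1}(v1) and E_{G2}(v2), represented as a
multiset of pairs whose projections are exactly these two multisets.\<close>
definition edge_bij :: "('a uprod \<times> 'a uprod) multiset \<Rightarrow> 'a uprod multiset \<Rightarrow> 'a uprod multiset \<Rightarrow> bool" where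
  "edge_bij P A B \<longleftrightarrow> image_mset fst P = A \<and> image_mset snd P = B"

definition esum_V :: "'a set \<Rightarrow> 'a set \<Rightarrow> 'a \<Rightarrow> 'a \<Rightarrow> 'a set" where
  "esum_V V1 V2 v1 v2 = (V1 - {v1}) \<union> (V2 - {v2})"

definition esum_E :: "'a uprod multiset \<Rightarrow> 'a uprod multiset \<Rightarrow> 'a \<Rightarrow> 'a \<Rightarrow>
    ('a uprod \<times> 'a uprod) multiset \<Rightarrow> 'a uprod multiset" where
  "esum_E E1 E2 v1 v2 P =
     (E1 - inc_edges E1 v1) + (E2 - inc_edges E2 v2)
     + image_mset (\<lambda>(e, f). Upair (other_end v1 e) (other_end v2 f)) P"

inductive in_Asum :: "nat \<Rightarrow> nat set \<Rightarrow> nat uprod multiset \<Rightarrow> bool" for k where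
  base: "in_A k V E \<Longrightarrow> in_Asum k V E"
| iso: "in_Asum k V E \<Longrightarrow> bij_betw f V V' \<Longrightarrow> in_Asum k V' (image_mset (map_uprod f) E)"
| union: "in_Asum k V1 E1 \<Longrightarrow> in_Asum k V2 E2 \<Longrightarrow> V1 \<inter> V2 = {} \<Longrightarrow>
          in_Asum k (V1 \<union> V2) (E1 + E2)"
| esum: "in_Asum k V1 E1 \<Longrightarrow> in_Asum k V2 E2 \<Longrightarrow> V1 \<inter> V2 = {} \<Longrightarrow>
          v1 \<in> V1 \<Longrightarrow> v2 \<in> V2 \<Longrightarrow> deg E1 v1 = k' \<Longrightarrow> deg E2 v2 = k' \<Longrightarrow>
          1 \<le> k' \<Longrightarrow> k' \<le> k \<Longrightarrow> edge_bij P (inc_edges E1 v1) (inc_edges E2 v2) \<Longrightarrow>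
          in_Asum k (esum_V V1 V2 v1 v2) (esum_E E1 E2 v1 v2 P)"

end

theory Submission
  imports Defs
begin

(* Edge-admissibility at most k means that there is an ordering of the vertices in which every
   vertex x lies in a set of vertices with at most k boundary edges that contains no earlier
   vertex: a minimum edge cut from x to the earlier vertices is the boundary of the set of
   vertices still reachable from x after deleting it.

   Graphs in A_k have such orderings with any prescribed first vertex w: take w (cut off by V),
   then the vertex of large degree (cut off by V - {w}), then the others (cut off by singletons).
   Rooted orderings survive isomorphisms, disjoint unions and edge sums: in an edge sum, a set
   on the first side containing the sum vertex is replaced by its union with the second side
   minus its sum vertex, which keeps the boundary, and the second side is ordered starting at
   its sum vertex. Hence graphs in A_k^(<=k) even have edge-admissibility at most k.

   Conversely, take such an ordering of a graph G outside A_k, vertices h before xi of degree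
   larger than k, and a set X of minimum boundary among those containing xi but no earlier
   vertex. By submodularity and posimodularity of the boundary, contracting X, or its complement,
   to a single vertex leaves orderings of the same kind. Both contractions are smaller than G,
   since X is neither {xi} nor V - {h}, and G is their (<= k)-edge sum along the new vertices,
   or the disjoint union of its two induced parts if X has no boundary edges. *)

section \<open>Boundaries of vertex sets\<close>

definition crosses :: "'a set \<Rightarrow> 'a uprod \<Rightarrow> bool" where
  "crosses X e \<longleftrightarrow> set_uprod e \<inter> X \<noteq> {} \<and> \<not> set_uprod e \<subseteq> X"

definition cut_size :: "'a uprod multiset \<Rightarrow> 'a set \<Rightarrow> nat" where
  "cut_size E X = size (filter_mset (crosses X) E)"

definition induced :: "'a uprod multiset \<Rightarrow> 'a set \<Rightarrow> 'a uprod multiset" where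
  "induced E X = filter_mset (\<lambda>e. set_uprod e \<subseteq> X) E"

lemma crosses_Upair [simp]: "crosses X (Upair p q) \<longleftrightarrow> (p \<in> X) \<noteq> (q \<in> X)"
  unfolding crosses_def by auto

lemma crossesE:
  assumes "crosses X e"
  obtains a b where "e = Upair a b" "a \<in> X" "b \<notin> X"
proof (cases e)
  case (Upair p q)
  then show ?thesis
    using that[of p q] that[of q p] assms by (cases "p \<in> X") (auto simp: Upair_inject)
qed

lemma cut_size_add [simp]: "cut_size (A + B) X = cut_size A X + cut_size B X"
  unfolding cut_size_def by simp

lemma cut_size_cong: "(\<And>e. e \<in># E \<Longrightarrow> crosses X e = crosses Y e) \<Longrightarrow> cut_size E X = cut_size E Y"
  unfolding cut_size_def by (metis filter_mset_cong)

lemma cut_size_eq_0: "(\<And>e. e \<in># E \<Longrightarrow> \<not> crosses X e) \<Longrightarrow> cut_size E X = 0"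
  unfolding cut_size_def by (simp add: filter_mset_eq_mempty_iff)

lemma cut_size_image_mset: "cut_size (image_mset h M) Z = size (filter_mset (\<lambda>x. crosses Z (h x)) M)"
  unfolding cut_size_def filter_mset_image_mset by simp

lemma cut_size_image_filter:
  assumes "\<And>e. e \<in># E \<Longrightarrow> Q e \<Longrightarrow> \<forall>x\<in>set_uprod e. g x \<in> Z \<longleftrightarrow> x \<in> W"
      and "\<And>e. e \<in># E \<Longrightarrow> \<not> Q e \<Longrightarrow> \<not> crosses W e"
  shows "cut_size (image_mset (map_uprod g) (filter_mset Q E)) Z = cut_size E W"
proof -
  have "filter_mset (\<lambda>e. crosses Z (map_uprod g e)) (filter_mset Q E) = filter_mset (crosses W) E"
    unfolding filter_filter_mset
  proof (rule filter_mset_cong[OF refl])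
    fix e assume "e \<in># E"
    then show "(Q e \<and> crosses Z (map_uprod g e)) = crosses W e"
      using assms[of e] by (cases e) auto
  qed
  then show ?thesis unfolding cut_size_image_mset by (simp add: cut_size_def)
qed

lemma cut_size_le_pointwise:
  assumes "\<And>e. of_bool (crosses A e) + of_bool (crosses B e)
                 \<le> of_bool (crosses C e) + (of_bool (crosses D e) :: nat)"
  shows "cut_size E A + cut_size E B \<le> cut_size E C + cut_size E D"
  unfolding cut_size_def
proof (induction E)
  case (add e E)
  have "size (filter_mset P (add_mset e E)) = of_bool (P e) + size (filter_mset P E)" for P
    by simp
  then show ?case using add.IH assms[of e] by (simp only:)
qed simp

lemma cut_size_submodular: "cut_size E (A \<inter> B) + cut_size E (A \<union> B) \<le> cut_size E A + cut_size E B"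
  by (rule cut_size_le_pointwise) (case_tac e, auto)

lemma cut_size_posimodular: "cut_size E (A - B) + cut_size E (B - A) \<le> cut_size E A + cut_size E B"
  by (rule cut_size_le_pointwise) (case_tac e, auto)

lemma mgraph_edge: "mgraph V E \<Longrightarrow> e \<in># E \<Longrightarrow> \<exists>a b. e = Upair a b \<and> a \<noteq> b \<and> a \<in> V \<and> b \<in> V"
  unfolding mgraph_def by (cases e) fastforce

lemma cut_size_vertex_set: "mgraph V E \<Longrightarrow> cut_size E V = 0"
  by (rule cut_size_eq_0) (auto dest!: mgraph_edge)

lemma cut_size_disjoint: "mgraph V E \<Longrightarrow> X \<inter> V = {} \<Longrightarrow> cut_size E X = 0"
  by (rule cut_size_eq_0) (auto dest!: mgraph_edge)

lemma cut_size_Diff: "mgraph V E \<Longrightarrow> cut_size E (V - Y) = cut_size E Y"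
  by (rule cut_size_cong) (auto dest!: mgraph_edge)

lemma cut_size_singleton: "mgraph V E \<Longrightarrow> cut_size E {x} = deg E x"
  unfolding cut_size_def deg_def inc_edges_def
  by (rule arg_cong[where f=size], rule filter_mset_cong) (auto dest!: mgraph_edge)

lemma mgraph_induced: "mgraph V E \<Longrightarrow> X \<subseteq> V \<Longrightarrow> mgraph X (induced E X)"
  unfolding mgraph_def induced_def by (auto intro: finite_subset)

lemma induced_add_cut_edges:
  assumes "mgraph V E" "X \<subseteq> V"
  shows "induced E (V - X) + induced E X + filter_mset (crosses X) E = E"
proof (rule multiset_eqI)
  fix e
  show "count (induced E (V - X) + induced E X + filter_mset (crosses X) E) e = count E e"
  proof (cases "e \<in># E")
    case True
    then show ?thesis using mgraph_edge[OF assms(1) True] by (auto simp: induced_def)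
  qed (simp add: not_in_iff induced_def)
qed


section \<open>Edge cuts\<close>

lemma rtranclp_adj_stays_in:
  assumes "(adj E)\<^sup>*\<^sup>* v s" "v \<in> X" "\<And>e. e \<in># E \<Longrightarrow> \<not> crosses X e"
  shows "s \<in> X"
  using assms(1,2)
proof induction
  case (step y z)
  then have "Upair y z \<in># E" by (simp add: adj_def)
  from assms(3)[OF this] step show ?case by auto
qed

lemma edge_cut_num_le_cut_size:
  assumes "v \<in> X" "X \<inter> S = {}"
  shows "edge_cut_num E v S \<le> cut_size E X"
proof -
  let ?F = "filter_mset (crosses X) E"
  have "E - ?F = filter_mset (\<lambda>e. \<not> crosses X e) E"
    by (rule multiset_eqI) simp
  then have "s \<in> X" if "(adj (E - ?F))\<^sup>*\<^sup>* v s" for s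
    using rtranclp_adj_stays_in[OF that assms(1)] by simp
  then have "\<not> (\<exists>s\<in>S. (adj (E - ?F))\<^sup>*\<^sup>* v s)"
    using assms(2) by blast
  then have "\<exists>F. F \<subseteq># E \<and> size F = cut_size E X \<and> \<not> (\<exists>s\<in>S. (adj (E - F))\<^sup>*\<^sup>* v s)"
    by (intro exI[of _ ?F]) (simp add: cut_size_def)
  then show ?thesis unfolding edge_cut_num_def by (rule Least_le)
qed

lemma cut_size_reachable_le: "cut_size E {s. (adj (E - F))\<^sup>*\<^sup>* v s} \<le> size F"
proof -
  let ?X = "{s. (adj (E - F))\<^sup>*\<^sup>* v s}"
  have "filter_mset (crosses ?X) E \<subseteq># F"
  proof (rule mset_subset_eqI)
    fix e
    show "count (filter_mset (crosses ?X) E) e \<le> count F e"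
    proof (cases "crosses ?X e")
      case True
      then obtain a b where e: "e = Upair a b" "a \<in> ?X" "b \<notin> ?X" by (rule crossesE)
      have "e \<notin># E - F"
      proof
        assume "e \<in># E - F"
        then have "adj (E - F) a b" using e by (simp add: adj_def)
        then show False using e(2,3) by (auto intro: rtranclp.rtrancl_into_rtrancl)
      qed
      then show ?thesis using True by (simp add: not_in_iff)
    qed simp
  qed
  then show ?thesis unfolding cut_size_def by (rule size_mset_mono)
qed

lemma rtranclp_adj_in_vertices:
  assumes "mgraph V E" "v \<in> V" "E' \<subseteq># E" "(adj E')\<^sup>*\<^sup>* v s"
  shows "s \<in> V"
  using assms(4)
proof (induction rule: rtranclp_induct)
  case (step y z)
  then have "Upair y z \<in># E" using assms(3) unfolding adj_def by (meson mset_subset_eqD)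
  then show ?case using assms(1) unfolding mgraph_def by auto
qed (simp add: assms(2))

lemma ex_cut_size_le_edge_cut_num:
  assumes "mgraph V E" "v \<in> V" "v \<notin> S"
  shows "\<exists>X\<subseteq>V. v \<in> X \<and> X \<inter> S = {} \<and> cut_size E X \<le> edge_cut_num E v S"
proof -
  let ?P = "\<lambda>n. \<exists>F. F \<subseteq># E \<and> size F = n \<and> \<not> (\<exists>s\<in>S. (adj (E - F))\<^sup>*\<^sup>* v s)"
  have "(adj (E - E))\<^sup>*\<^sup>* v s \<Longrightarrow> s = v" for s
    by (induction rule: rtranclp_induct) (auto simp: adj_def)
  then have "?P (size E)"
    using assms(3) by blast
  then have "?P (edge_cut_num E v S)" unfolding edge_cut_num_def by (rule LeastI)
  then obtain F where F: "size F = edge_cut_num E v S" "\<not> (\<exists>s\<in>S. (adj (E - F))\<^sup>*\<^sup>* v s)"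
    by blast
  let ?X = "{s. (adj (E - F))\<^sup>*\<^sup>* v s}"
  have "?X \<subseteq> V" using rtranclp_adj_in_vertices[OF assms(1,2), of "E - F"] by auto
  moreover have "v \<in> ?X" "?X \<inter> S = {}" using F(2) by auto
  ultimately show ?thesis using cut_size_reachable_le[of E F v] F(1) by auto
qed

section \<open>Orderings of cost at most k\<close>

definition before :: "'a list \<Rightarrow> 'a \<Rightarrow> 'a \<Rightarrow> bool" where
  "before vs y x \<longleftrightarrow> (\<exists>as bs. vs = as @ x # bs \<and> y \<in> set as)"

lemma before_nth: "before vs y x \<longleftrightarrow> (\<exists>i j. i < j \<and> j < length vs \<and> vs ! i = y \<and> vs ! j = x)"
proof
  assume "before vs y x"
  then obtain as bs where vs: "vs = as @ x # bs" "y \<in> set as" unfolding before_def by blast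
  then obtain i where "i < length as" "as ! i = y" by (auto simp: in_set_conv_nth)
  then show "\<exists>i j. i < j \<and> j < length vs \<and> vs ! i = y \<and> vs ! j = x"
    using vs by (intro exI[of _ i] exI[of _ "length as"]) (auto simp: nth_append)
next
  assume "\<exists>i j. i < j \<and> j < length vs \<and> vs ! i = y \<and> vs ! j = x"
  then obtain i j where ij: "i < j" "j < length vs" "vs ! i = y" "vs ! j = x" by blast
  have "vs = take j vs @ x # drop (Suc j) vs" using ij id_take_nth_drop[of j vs] by simp
  moreover have "y \<in> set (take j vs)" using ij by (auto simp: in_set_conv_nth intro!: exI[of _ i])
  ultimately show "before vs y x" unfolding before_def by blast
qed

lemma before_iff_in_take:
  "distinct vs \<Longrightarrow> i < length vs \<Longrightarrow> before vs y (vs ! i) \<longleftrightarrow> y \<in> set (take i vs)"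
  unfolding before_nth by (auto simp: in_set_conv_nth nth_eq_iff_index_eq) (metis less_trans)

lemma before_in_set: "before vs y x \<Longrightarrow> y \<in> set vs \<and> x \<in> set vs"
  unfolding before_nth by auto

lemma before_irrefl: "distinct vs \<Longrightarrow> \<not> before vs x x"
  unfolding before_nth by (auto simp: nth_eq_iff_index_eq)

lemma before_trans: "distinct vs \<Longrightarrow> before vs x y \<Longrightarrow> before vs y z \<Longrightarrow> before vs x z"
  unfolding before_nth by (auto simp: nth_eq_iff_index_eq) (metis less_trans)

lemma before_total:
  "distinct vs \<Longrightarrow> x \<in> set vs \<Longrightarrow> y \<in> set vs \<Longrightarrow> x \<noteq> y \<Longrightarrow> before vs x y \<or> before vs y x"
  unfolding before_nth by (auto simp: in_set_conv_nth) (metis linorder_neqE_nat)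

lemma before_Cons: "before (v # vs) y x \<longleftrightarrow> (y = v \<and> x \<in> set vs) \<or> before vs y x"
proof
  assume "before (v # vs) y x"
  then obtain as bs where h: "v # vs = as @ x # bs" "y \<in> set as" unfolding before_def by blast
  then obtain as' where "as = v # as'" by (cases as) auto
  with h show "(y = v \<and> x \<in> set vs) \<or> before vs y x" unfolding before_def by auto
next
  assume "(y = v \<and> x \<in> set vs) \<or> before vs y x"
  then show "before (v # vs) y x"
  proof
    assume "y = v \<and> x \<in> set vs"
    then obtain as bs where "vs = as @ x # bs" by (metis split_list)
    then show ?thesis using \<open>y = v \<and> x \<in> set vs\<close> unfolding before_def
      by (intro exI[of _ "v # as"] exI[of _ bs]) auto
  next
    assume "before vs y x"
    then obtain as bs where "vs = as @ x # bs" "y \<in> set as" unfolding before_def by blast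
    then show ?thesis unfolding before_def
      by (intro exI[of _ "v # as"] exI[of _ bs]) auto
  qed
qed

lemma not_before_hd: "distinct (w # vs) \<Longrightarrow> \<not> before (w # vs) y w"
  by (auto simp: before_Cons dest: before_in_set)

lemma before_filterD: "before (filter P vs) y x \<Longrightarrow> before vs y x"
  by (induction vs) (auto simp: before_Cons split: if_splits)

lemma before_appendD:
  "before (xs @ ys) y x \<Longrightarrow> before xs y x \<or> (x \<in> set ys \<and> (y \<in> set xs \<or> before ys y x))"
  by (induction xs) (auto simp: before_Cons dest: before_in_set)

lemma before_mapD: "before (map g vs) y' x' \<Longrightarrow> \<exists>y x. g y = y' \<and> g x = x' \<and> before vs y x"
  unfolding before_nth by auto blast

definition separating_set :: "'a list \<Rightarrow> 'a set \<Rightarrow> 'a \<Rightarrow> 'a set \<Rightarrow> bool" where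
  "separating_set vs V x X \<longleftrightarrow> X \<subseteq> V \<and> x \<in> X \<and> (\<forall>y. before vs y x \<longrightarrow> y \<notin> X)"

definition admissible_order :: "nat \<Rightarrow> 'a set \<Rightarrow> 'a uprod multiset \<Rightarrow> 'a list \<Rightarrow> bool" where
  "admissible_order k V E vs \<longleftrightarrow> distinct vs \<and> set vs = V \<and>
     (\<forall>x\<in>set vs. \<exists>X. separating_set vs V x X \<and> cut_size E X \<le> k)"

lemma finite_orderings: "finite V \<Longrightarrow> finite {vs. distinct vs \<and> set vs = V}"
  by (rule finite_subset[OF _ finite_lists_length_eq[of V "card V"]]) (auto simp: distinct_card)

lemma finite_cut_nums: "finite {edge_cut_num E (vs ! i) (set (take i vs)) | i. i < length vs}"
proof -
  have "{edge_cut_num E (vs ! i) (set (take i vs)) | i. i < length vs}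
        = (\<lambda>i. edge_cut_num E (vs ! i) (set (take i vs))) ` {..<length vs}" by auto
  then show ?thesis by simp
qed

lemma order_cost_le_if_admissible_order:
  assumes "admissible_order k V E vs"
  shows "order_cost E vs \<le> k"
  unfolding order_cost_def
proof (rule Max.boundedI)
  fix a assume "a \<in> insert 0 {edge_cut_num E (vs ! i) (set (take i vs)) | i. i < length vs}"
  then show "a \<le> k"
  proof
    assume "a \<in> {edge_cut_num E (vs ! i) (set (take i vs)) | i. i < length vs}"
    then obtain i where i: "i < length vs" "a = edge_cut_num E (vs ! i) (set (take i vs))" by blast
    then obtain X where X: "separating_set vs V (vs ! i) X" "cut_size E X \<le> k"
      using assms unfolding admissible_order_def by (meson nth_mem)
    then have "vs ! i \<in> X" "X \<inter> set (take i vs) = {}"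
      using before_iff_in_take[of vs i] assms i(1) by (auto simp: separating_set_def admissible_order_def)
    then show "a \<le> k"
      using edge_cut_num_le_cut_size[of "vs ! i" X "set (take i vs)" E] X(2) i(2) by simp
  qed simp
qed (use finite_cut_nums in auto)

lemma admissible_order_if_order_cost_le:
  assumes "mgraph V E" "distinct vs" "set vs = V" "order_cost E vs \<le> k"
  shows "admissible_order k V E vs"
  unfolding admissible_order_def
proof (intro conjI ballI)
  fix x assume "x \<in> set vs"
  then obtain i where i: "i < length vs" "vs ! i = x" by (auto simp: in_set_conv_nth)
  have "edge_cut_num E x (set (take i vs)) \<le> order_cost E vs"
    unfolding order_cost_def using i by (intro Max_ge) (auto simp: finite_cut_nums)
  moreover have "x \<notin> set (take i vs)"
    using i assms(2) by (metis before_irrefl before_iff_in_take)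
  ultimately obtain X where X: "X \<subseteq> V" "x \<in> X" "X \<inter> set (take i vs) = {}" "cut_size E X \<le> k"
    using ex_cut_size_le_edge_cut_num[OF assms(1), of x "set (take i vs)"] i assms(3,4)
    by fastforce
  then have "separating_set vs V x X"
    using before_iff_in_take[OF assms(2) i(1)] i(2) by (auto simp: separating_set_def)
  then show "\<exists>X. separating_set vs V x X \<and> cut_size E X \<le> k" using X(4) by blast
qed (use assms in auto)

lemma edge_adm_le_iff_admissible_order:
  assumes "mgraph V E"
  shows "edge_adm V E \<le> k \<longleftrightarrow> (\<exists>vs. admissible_order k V E vs)"
proof -
  let ?orders = "{vs. distinct vs \<and> set vs = V}"
  have fin: "finite (order_cost E ` ?orders)"
    using assms finite_orderings by (auto simp: mgraph_def)
  have "?orders \<noteq> {}"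
    using finite_distinct_list[of V] assms by (auto simp: mgraph_def)
  then have "edge_adm V E \<in> order_cost E ` ?orders"
    unfolding edge_adm_def using Min_in[OF fin] by (simp add: setcompr_eq_image)
  moreover have "edge_adm V E \<le> order_cost E vs" if "vs \<in> ?orders" for vs
    unfolding edge_adm_def using fin that by (simp add: setcompr_eq_image)
  ultimately show ?thesis
  proof (intro iffI)
    assume "edge_adm V E \<in> order_cost E ` ?orders" "edge_adm V E \<le> k"
    then obtain vs where "vs \<in> ?orders" "order_cost E vs \<le> k" by auto
    then show "\<exists>vs. admissible_order k V E vs"
      using admissible_order_if_order_cost_le[OF assms] by blast
  next
    assume le: "\<And>vs. vs \<in> ?orders \<Longrightarrow> edge_adm V E \<le> order_cost E vs"
      and "\<exists>vs. admissible_order k V E vs"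
    then obtain vs where "admissible_order k V E vs" by blast
    then show "edge_adm V E \<le> k"
      using le[of vs] order_cost_le_if_admissible_order by (fastforce simp: admissible_order_def)
  qed
qed


section \<open>Closure under isomorphisms, disjoint unions and edge sums\<close>

text \<open>Prescribing the first vertex is what makes this property survive edge sums: there the
  order of one summand has to start at its sum vertex.\<close>

definition rooted_admissible :: "nat \<Rightarrow> 'a set \<Rightarrow> 'a uprod multiset \<Rightarrow> bool" where
  "rooted_admissible k V E \<longleftrightarrow> mgraph V E \<and> (\<forall>w\<in>V. \<exists>vs. admissible_order k V E vs \<and> hd vs = w)"

lemma rooted_admissible_ex_admissible_order:
  "rooted_admissible k V E \<Longrightarrow> \<exists>vs. admissible_order k V E vs"
  unfolding rooted_admissible_def admissible_order_def
  by (cases "V = {}") (auto intro: exI[of _ "[]"])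

lemma rooted_admissible_if_in_A:
  assumes "in_A k V E"
  shows "rooted_admissible k V E"
proof -
  have mg: "mgraph V E" using assms by (simp add: in_A_def)
  obtain u where u: "\<forall>v\<in>V. v \<noteq> u \<longrightarrow> deg E v \<le> k" using assms by (auto simp: in_A_def)
  have "\<exists>vs. admissible_order k V E vs \<and> hd vs = w" if w: "w \<in> V" for w
  proof -
    obtain L where L: "set L = V - {w, u}" "distinct L"
      using finite_distinct_list[of "V - {w, u}"] mg by (auto simp: mgraph_def)
    define vs where "vs = w # (if u \<in> V \<and> u \<noteq> w then u # L else L)"
    have vs: "distinct vs" "set vs = V" using L w by (auto simp: vs_def)
    have "\<exists>X. separating_set vs V x X \<and> cut_size E X \<le> k" if x: "x \<in> V" for x
    proof -
      consider "x = w" | "x = u" "x \<noteq> w" | "x \<noteq> u" "x \<noteq> w" by blast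
      then show ?thesis
      proof cases
        case 1
        have "\<not> before vs y w" for y
          using vs(1) unfolding vs_def by (rule not_before_hd)
        then have "separating_set vs V x V" using 1 w by (simp add: separating_set_def)
        then show ?thesis using cut_size_vertex_set[OF mg] by auto
      next
        case 2
        have "before vs y x \<Longrightarrow> y = w" for y
          using 2 x L by (auto simp: vs_def before_Cons dest: before_in_set)
        then have "separating_set vs V x (V - {w})" using 2 x by (auto simp: separating_set_def)
        moreover have "cut_size E (V - {w}) \<le> k"
          using cut_size_Diff[OF mg] cut_size_singleton[OF mg] u w 2 by simp
        ultimately show ?thesis by blast
      next
        case 3
        then have "separating_set vs V x {x}"
          using x before_irrefl[OF vs(1)] by (auto simp: separating_set_def)
        then show ?thesis using cut_size_singleton[OF mg] u x 3 by auto
      qed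
    qed
    then have "admissible_order k V E vs" using vs by (simp add: admissible_order_def)
    then show ?thesis by (auto simp: vs_def)
  qed
  then show ?thesis using mg by (simp add: rooted_admissible_def)
qed

lemma mgraph_image:
  assumes "mgraph V E" "bij_betw f V V'"
  shows "mgraph V' (image_mset (map_uprod f) E)"
  unfolding mgraph_def
proof (intro conjI ballI)
  show "finite V'" using assms bij_betw_finite by (auto simp: mgraph_def)
next
  fix e' assume "e' \<in># image_mset (map_uprod f) E"
  then obtain a b where "e' = Upair (f a) (f b)" "a \<noteq> b" "a \<in> V" "b \<in> V"
    using mgraph_edge[OF assms(1)] by fastforce
  then show "proper_uprod e'" "set_uprod e' \<subseteq> V'"
    using assms(2) by (auto simp: bij_betw_def dest: inj_onD)
qed

lemma admissible_order_image:
  assumes mg: "mgraph V E" and adm: "admissible_order k V E vs" and f: "bij_betw f V V'"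
  shows "admissible_order k V' (image_mset (map_uprod f) E) (map f vs)"
  unfolding admissible_order_def
proof (intro conjI ballI)
  have inj: "inj_on f V" and img: "f ` V = V'" using f by (auto simp: bij_betw_def)
  have vs: "distinct vs" "set vs = V" using adm by (auto simp: admissible_order_def)
  then show "distinct (map f vs)" "set (map f vs) = V'" using inj img by (auto simp: distinct_map)
  fix x' assume "x' \<in> set (map f vs)"
  then obtain x where x: "x \<in> V" "x' = f x" using vs by auto
  then obtain X where X: "separating_set vs V x X" "cut_size E X \<le> k"
    using adm vs by (auto simp: admissible_order_def)
  have mem: "a \<in> V \<Longrightarrow> f a \<in> f ` X \<longleftrightarrow> a \<in> X" for a
    using X(1) inj_on_image_mem_iff[OF inj] by (auto simp: separating_set_def)
  have "cut_size (image_mset (map_uprod f) E) (f ` X) = cut_size E X"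
    using cut_size_image_filter[of E "\<lambda>_. True" f "f ` X" X] mem mgraph_edge[OF mg] by fastforce
  moreover have "separating_set (map f vs) V' x' (f ` X)"
    unfolding separating_set_def
  proof (intro conjI allI impI)
    show "f ` X \<subseteq> V'" "x' \<in> f ` X" using X(1) x img by (auto simp: separating_set_def)
    fix y' assume "before (map f vs) y' x'"
    then obtain y z where yz: "f y = y'" "f z = x'" "before vs y z" by (auto dest: before_mapD)
    then have "y \<in> V" "z = x" using x inj vs before_in_set[OF yz(3)] by (auto dest: inj_onD)
    then show "y' \<notin> f ` X" using X(1) yz mem by (auto simp: separating_set_def)
  qed
  ultimately show "\<exists>X'. separating_set (map f vs) V' x' X' \<and>
      cut_size (image_mset (map_uprod f) E) X' \<le> k"
    using X(2) by auto
qed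

lemma rooted_admissible_image:
  assumes "rooted_admissible k V E" "bij_betw f V V'"
  shows "rooted_admissible k V' (image_mset (map_uprod f) E)"
proof -
  have mg: "mgraph V E" using assms(1) by (simp add: rooted_admissible_def)
  have "\<exists>vs. admissible_order k V' (image_mset (map_uprod f) E) vs \<and> hd vs = w'" if w': "w' \<in> V'" for w'
  proof -
    obtain w where w: "w \<in> V" "f w = w'" using w' assms(2) unfolding bij_betw_def by blast
    then obtain vs where vs: "admissible_order k V E vs" "hd vs = w"
      using assms(1) by (auto simp: rooted_admissible_def)
    then have "hd (map f vs) = w'" using w by (cases vs) (auto simp: admissible_order_def)
    then show ?thesis using admissible_order_image[OF mg vs(1) assms(2)] by blast
  qed
  then show ?thesis using mgraph_image[OF mg assms(2)] by (simp add: rooted_admissible_def)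
qed

lemma admissible_order_append:
  assumes "mgraph V1 E1" "mgraph V2 E2" "V1 \<inter> V2 = {}"
    and "admissible_order k V1 E1 vs1" "admissible_order k V2 E2 vs2"
  shows "admissible_order k (V1 \<union> V2) (E1 + E2) (vs1 @ vs2)"
  unfolding admissible_order_def
proof (intro conjI ballI)
  have vs: "distinct vs1" "set vs1 = V1" "distinct vs2" "set vs2 = V2"
    using assms(4,5) by (auto simp: admissible_order_def)
  then show "distinct (vs1 @ vs2)" "set (vs1 @ vs2) = V1 \<union> V2" using assms(3) by auto
  fix x assume "x \<in> set (vs1 @ vs2)"
  then consider "x \<in> V1" | "x \<in> V2" using vs by auto
  then show "\<exists>X. separating_set (vs1 @ vs2) (V1 \<union> V2) x X \<and> cut_size (E1 + E2) X \<le> k"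
  proof cases
    case 1
    then obtain X where X: "separating_set vs1 V1 x X" "cut_size E1 X \<le> k"
      using assms(4) vs by (auto simp: admissible_order_def)
    then have "separating_set (vs1 @ vs2) (V1 \<union> V2) x X"
      using 1 vs assms(3) by (auto simp: separating_set_def dest!: before_appendD)
    moreover have "cut_size E2 X = 0"
      using cut_size_disjoint[OF assms(2)] X(1) assms(3) by (auto simp: separating_set_def)
    ultimately show ?thesis using X(2) by auto
  next
    case 2
    then obtain X where X: "separating_set vs2 V2 x X" "cut_size E2 X \<le> k"
      using assms(5) vs by (auto simp: admissible_order_def)
    have "y \<notin> X" if "before (vs1 @ vs2) y x" for y
    proof -
      have "x \<notin> set vs1" using 2 vs assms(3) by auto
      then have "y \<in> set vs1 \<or> before vs2 y x"
        using before_appendD[OF that] before_in_set by metis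
      then show ?thesis using X(1) vs assms(3) by (auto simp: separating_set_def)
    qed
    then have "separating_set (vs1 @ vs2) (V1 \<union> V2) x X"
      using X(1) by (auto simp: separating_set_def)
    moreover have "cut_size E1 X = 0"
      using cut_size_disjoint[OF assms(1)] X(1) assms(3) by (auto simp: separating_set_def)
    ultimately show ?thesis using X(2) by auto
  qed
qed

lemma rooted_admissible_union:
  assumes "rooted_admissible k V1 E1" "rooted_admissible k V2 E2" "V1 \<inter> V2 = {}"
  shows "rooted_admissible k (V1 \<union> V2) (E1 + E2)"
proof -
  have root_left: "\<exists>vs. admissible_order k (A \<union> B) (EA + EB) vs \<and> hd vs = w"
    if AB: "rooted_admissible k A EA" "rooted_admissible k B EB" "A \<inter> B = {}" "w \<in> A"
    for A B :: "'a set" and EA EB w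
  proof -
    obtain vs1 where vs1: "admissible_order k A EA vs1" "hd vs1 = w"
      using AB(1,4) by (auto simp: rooted_admissible_def)
    obtain vs2 where "admissible_order k B EB vs2"
      using rooted_admissible_ex_admissible_order AB(2) by blast
    moreover have "vs1 \<noteq> []" using vs1 AB(4) by (auto simp: admissible_order_def)
    ultimately show ?thesis
      using admissible_order_append[OF _ _ AB(3) vs1(1)] AB vs1(2)
      by (intro exI[of _ "vs1 @ vs2"]) (auto simp: rooted_admissible_def)
  qed
  have "\<exists>vs. admissible_order k (V1 \<union> V2) (E1 + E2) vs \<and> hd vs = w" if "w \<in> V1 \<union> V2" for w
    using that root_left[OF assms] root_left[OF assms(2,1)] assms(3)
    by (auto simp: Un_commute add.commute Int_commute)
  then show ?thesis using assms by (auto simp: rooted_admissible_def mgraph_def)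
qed


lemma other_end_Upair [simp]: "other_end v (Upair v x) = x"
  unfolding other_end_def by (rule the_equality) auto

lemma other_end_Upair' [simp]: "other_end v (Upair x v) = x"
  unfolding other_end_def by (rule the_equality) auto

lemma diff_inc_edges: "E - inc_edges E v = filter_mset (\<lambda>e. v \<notin> set_uprod e) E"
  by (rule multiset_eqI) (simp add: inc_edges_def)

lemma inc_edgesE:
  assumes "mgraph V E" "e \<in># inc_edges E v"
  obtains a where "e = Upair v a" "a \<in> V - {v}"
proof -
  have e: "e \<in># E" "v \<in> set_uprod e" using assms(2) by (auto simp: inc_edges_def)
  obtain p q where "e = Upair p q" "p \<noteq> q" "p \<in> V" "q \<in> V"
    using mgraph_edge[OF assms(1) e(1)] by blast
  then show ?thesis using that[of q] that[of p] e(2) by auto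
qed

lemma edge_bij_pairE:
  assumes "mgraph V1 E1" "mgraph V2 E2" "edge_bij P (inc_edges E1 v1) (inc_edges E2 v2)"
    and "(e, f) \<in># P"
  obtains a b where "e = Upair v1 a" "f = Upair v2 b" "a \<in> V1 - {v1}" "b \<in> V2 - {v2}"
proof -
  have "e \<in># inc_edges E1 v1" "f \<in># inc_edges E2 v2"
    using assms(3,4) unfolding edge_bij_def by (metis fst_conv snd_conv image_eqI set_image_mset)+
  then show ?thesis using that inc_edgesE[OF assms(1)] inc_edgesE[OF assms(2)] by metis
qed

lemma edge_bij_swap: "edge_bij P A B \<Longrightarrow> edge_bij (image_mset prod.swap P) B A"
  unfolding edge_bij_def by (simp add: multiset.map_comp o_def)

lemma esum_V_swap: "esum_V V1 V2 v1 v2 = esum_V V2 V1 v2 v1"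
  unfolding esum_V_def by auto

lemma esum_E_swap: "esum_E E1 E2 v1 v2 P = esum_E E2 E1 v2 v1 (image_mset prod.swap P)"
proof -
  have "image_mset (\<lambda>(e, f). Upair (other_end v1 e) (other_end v2 f)) P
      = image_mset (\<lambda>(e, f). Upair (other_end v2 e) (other_end v1 f)) (image_mset prod.swap P)"
    by (simp add: multiset.map_comp o_def case_prod_beta) (rule image_mset_cong, auto)
  then show ?thesis unfolding esum_E_def by (simp add: ac_simps)
qed

lemma mgraph_esum:
  assumes mg1: "mgraph V1 E1" and mg2: "mgraph V2 E2" and disj: "V1 \<inter> V2 = {}"
    and eb: "edge_bij P (inc_edges E1 v1) (inc_edges E2 v2)"
  shows "mgraph (esum_V V1 V2 v1 v2) (esum_E E1 E2 v1 v2 P)"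
  unfolding mgraph_def
proof (rule conjI[OF _ ballI])
  show "finite (esum_V V1 V2 v1 v2)" using mg1 mg2 by (auto simp: mgraph_def esum_V_def)
next
  fix e assume "e \<in># esum_E E1 E2 v1 v2 P"
  then consider "e \<in># E1" "v1 \<notin> set_uprod e" | "e \<in># E2" "v2 \<notin> set_uprod e"
    | e1 f1 where "(e1, f1) \<in># P" "e = Upair (other_end v1 e1) (other_end v2 f1)"
    unfolding esum_E_def diff_inc_edges by auto
  then show "proper_uprod e \<and> set_uprod e \<subseteq> esum_V V1 V2 v1 v2"
  proof cases
    case 3
    then show ?thesis
      using disj by (elim edge_bij_pairE[OF mg1 mg2 eb]) (auto simp: esum_V_def)
  qed (use mg1 mg2 in \<open>auto simp: mgraph_def esum_V_def\<close>)
qed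

lemma cut_size_esum_E_left:
  assumes mg1: "mgraph V1 E1" and mg2: "mgraph V2 E2" and disj: "V1 \<inter> V2 = {}"
    and eb: "edge_bij P (inc_edges E1 v1) (inc_edges E2 v2)" and XV: "X \<subseteq> V1"
  shows "cut_size (esum_E E1 E2 v1 v2 P) ((X - {v1}) \<union> (if v1 \<in> X then V2 - {v2} else {}))
    = cut_size E1 X"
proof -
  define X' where "X' = (X - {v1}) \<union> (if v1 \<in> X then V2 - {v2} else {})"
  have mem1: "a \<in> X' \<longleftrightarrow> a \<in> X" if "a \<in> V1 - {v1}" for a
    using that disj by (auto simp: X'_def)
  have mem2: "b \<in> X' \<longleftrightarrow> v1 \<in> X" if "b \<in> V2 - {v2}" for b
    using that disj XV by (auto simp: X'_def)
  have rest1: "cut_size (E1 - inc_edges E1 v1) X' = cut_size (E1 - inc_edges E1 v1) X"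
    by (rule cut_size_cong)
      (use mem1 in \<open>auto simp: diff_inc_edges dest!: mgraph_edge[OF mg1]\<close>)
  have rest2: "cut_size (E2 - inc_edges E2 v2) X' = 0"
    by (rule cut_size_eq_0)
      (use mem2 in \<open>auto simp: diff_inc_edges dest!: mgraph_edge[OF mg2]\<close>)
  have "cut_size (image_mset (\<lambda>(e, f). Upair (other_end v1 e) (other_end v2 f)) P) X'
      = size (filter_mset (\<lambda>p. crosses X (fst p)) P)"
    unfolding cut_size_image_mset
  proof (rule arg_cong[where f=size], rule filter_mset_cong[OF refl])
    fix p assume "p \<in># P"
    moreover obtain e f where "p = (e, f)" by (cases p)
    ultimately show "crosses X' ((\<lambda>(e, f). Upair (other_end v1 e) (other_end v2 f)) p)
        = crosses X (fst p)"
      using mem1 mem2 by (auto elim!: edge_bij_pairE[OF mg1 mg2 eb])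
  qed
  also have "\<dots> = cut_size (inc_edges E1 v1) X"
    using eb unfolding edge_bij_def by (metis cut_size_image_mset)
  finally have glued: "cut_size (image_mset (\<lambda>(e, f). Upair (other_end v1 e) (other_end v2 f)) P) X'
      = cut_size (inc_edges E1 v1) X" .
  have "E1 = (E1 - inc_edges E1 v1) + inc_edges E1 v1"
    by (simp add: inc_edges_def)
  then have "cut_size E1 X = cut_size (E1 - inc_edges E1 v1) X + cut_size (inc_edges E1 v1) X"
    by (metis cut_size_add)
  then show ?thesis unfolding X'_def[symmetric] esum_E_def cut_size_add rest1 rest2 glued by simp
qed

lemma cut_size_esum_E_right:
  assumes mg1: "mgraph V1 E1" and mg2: "mgraph V2 E2" and disj: "V1 \<inter> V2 = {}"
    and eb: "edge_bij P (inc_edges E1 v1) (inc_edges E2 v2)"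
    and YV: "Y \<subseteq> V2" "v2 \<notin> Y"
  shows "cut_size (esum_E E1 E2 v1 v2 P) Y = cut_size E2 Y"
proof -
  have "cut_size (esum_E E2 E1 v2 v1 (image_mset prod.swap P))
          ((Y - {v2}) \<union> (if v2 \<in> Y then V1 - {v1} else {})) = cut_size E2 Y"
    by (rule cut_size_esum_E_left[OF mg2 mg1 _ edge_bij_swap[OF eb] YV(1)]) (use disj in auto)
  moreover have "(Y - {v2}) \<union> (if v2 \<in> Y then V1 - {v1} else {}) = Y" using YV by auto
  ultimately show ?thesis using esum_E_swap by metis
qed

lemma separating_set_esum_left:
  assumes disj: "V1 \<inter> V2 = {}" and vs1: "distinct vs1" "set vs1 = V1"
    and vs2: "set vs2 = V2 - {v2}" and X: "separating_set vs1 V1 x X" and "x \<noteq> v1"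
  shows "separating_set (filter (\<lambda>x. x \<noteq> v1) vs1 @ vs2) (esum_V V1 V2 v1 v2) x
           ((X - {v1}) \<union> (if v1 \<in> X then V2 - {v2} else {}))"
  unfolding separating_set_def
proof (intro conjI allI impI)
  show "(X - {v1}) \<union> (if v1 \<in> X then V2 - {v2} else {}) \<subseteq> esum_V V1 V2 v1 v2"
    using X by (auto simp: separating_set_def esum_V_def)
  show "x \<in> (X - {v1}) \<union> (if v1 \<in> X then V2 - {v2} else {})"
    using X \<open>x \<noteq> v1\<close> by (simp add: separating_set_def)
  fix y assume "before (filter (\<lambda>x. x \<noteq> v1) vs1 @ vs2) y x"
  moreover have "x \<notin> set vs2" using X vs2 disj by (auto simp: separating_set_def)
  ultimately have "before vs1 y x"
    using before_appendD before_filterD by metis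
  then have "y \<notin> X" "y \<in> V1"
    using X before_in_set[of vs1 y x] vs1 by (auto simp: separating_set_def)
  then show "y \<notin> (X - {v1}) \<union> (if v1 \<in> X then V2 - {v2} else {})" using disj by auto
qed

lemma separating_set_esum_right:
  assumes disj: "V1 \<inter> V2 = {}" and vs1: "set vs1 = V1"
    and Y: "separating_set (v2 # vs2) V2 x Y" "v2 \<notin> Y"
  shows "separating_set (filter (\<lambda>x. x \<noteq> v1) vs1 @ vs2) (esum_V V1 V2 v1 v2) x Y"
  unfolding separating_set_def
proof (intro conjI allI impI)
  show "Y \<subseteq> esum_V V1 V2 v1 v2" "x \<in> Y"
    using Y by (auto simp: separating_set_def esum_V_def)
  fix y assume "before (filter (\<lambda>x. x \<noteq> v1) vs1 @ vs2) y x"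
  moreover have "x \<notin> set (filter (\<lambda>x. x \<noteq> v1) vs1)" using Y vs1 disj by (auto simp: separating_set_def)
  ultimately have "y \<in> V1 \<or> before (v2 # vs2) y x"
    using before_appendD before_in_set vs1 by (metis before_Cons filter_is_subset subsetD)
  then show "y \<notin> Y" using Y disj by (auto simp: separating_set_def)
qed

lemma admissible_order_esum:
  assumes mg1: "mgraph V1 E1" and mg2: "mgraph V2 E2" and disj: "V1 \<inter> V2 = {}"
    and eb: "edge_bij P (inc_edges E1 v1) (inc_edges E2 v2)"
    and vs1: "admissible_order k V1 E1 vs1" and vs2: "admissible_order k V2 E2 (v2 # vs2)"
  shows "admissible_order k (esum_V V1 V2 v1 v2) (esum_E E1 E2 v1 v2 P)
           (filter (\<lambda>x. x \<noteq> v1) vs1 @ vs2)"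
  unfolding admissible_order_def
proof (intro conjI ballI)
  let ?vs = "filter (\<lambda>x. x \<noteq> v1) vs1 @ vs2"
  have d1: "distinct vs1" "set vs1 = V1" and d2: "distinct (v2 # vs2)" "set (v2 # vs2) = V2"
    using vs1 vs2 by (auto simp: admissible_order_def)
  then have t: "set vs2 = V2 - {v2}" by auto
  show "distinct ?vs" "set ?vs = esum_V V1 V2 v1 v2"
    using d1 d2 disj t by (auto simp: esum_V_def)
  fix x assume "x \<in> set ?vs"
  then consider "x \<in> V1" "x \<noteq> v1" | "x \<in> V2" "x \<noteq> v2" using d1 t by auto
  then show "\<exists>Z. separating_set ?vs (esum_V V1 V2 v1 v2) x Z \<and>
      cut_size (esum_E E1 E2 v1 v2 P) Z \<le> k"
  proof cases
    case 1
    then obtain X where X: "separating_set vs1 V1 x X" "cut_size E1 X \<le> k"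
      using vs1 d1 by (auto simp: admissible_order_def)
    moreover have "X \<subseteq> V1" using X(1) by (simp add: separating_set_def)
    ultimately show ?thesis
      using separating_set_esum_left[OF disj d1 t X(1) 1(2)] cut_size_esum_E_left[OF mg1 mg2 disj eb]
      by (intro exI[of _ "(X - {v1}) \<union> (if v1 \<in> X then V2 - {v2} else {})"]) simp
  next
    case 2
    then obtain Y where Y: "separating_set (v2 # vs2) V2 x Y" "cut_size E2 Y \<le> k"
      using vs2 d2 by (auto simp: admissible_order_def)
    moreover have "before (v2 # vs2) v2 x" using 2 t by (simp add: before_Cons)
    ultimately have "v2 \<notin> Y" by (auto simp: separating_set_def)
    moreover have "Y \<subseteq> V2" using Y(1) by (simp add: separating_set_def)
    ultimately show ?thesis
      using separating_set_esum_right[OF disj d1(2) Y(1)] cut_size_esum_E_right[OF mg1 mg2 disj eb]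
        Y(2) by (intro exI[of _ Y]) simp
  qed
qed

lemma rooted_admissible_esum:
  assumes "rooted_admissible k V1 E1" "rooted_admissible k V2 E2" "V1 \<inter> V2 = {}"
    and "v1 \<in> V1" "v2 \<in> V2" and eb: "edge_bij P (inc_edges E1 v1) (inc_edges E2 v2)"
  shows "rooted_admissible k (esum_V V1 V2 v1 v2) (esum_E E1 E2 v1 v2 P)"
proof -
  have root_left: "\<exists>vs. admissible_order k (esum_V A B a b) (esum_E EA EB a b Q) vs \<and> hd vs = w"
    if AB: "rooted_admissible k A EA" "rooted_admissible k B EB" "A \<inter> B = {}" "b \<in> B"
      "edge_bij Q (inc_edges EA a) (inc_edges EB b)" "w \<in> A - {a}"
    for A B :: "'a set" and EA EB a b Q w
  proof -
    have mg: "mgraph A EA" "mgraph B EB" using AB(1,2) by (auto simp: rooted_admissible_def)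
    obtain vs1 where vs1: "admissible_order k A EA vs1" "hd vs1 = w"
      using AB(1,6) by (auto simp: rooted_admissible_def)
    obtain vs2 where "admissible_order k B EB vs2" "hd vs2 = b"
      using AB(2,4) by (auto simp: rooted_admissible_def)
    then obtain t where vs2: "admissible_order k B EB (b # t)"
      using AB(4) by (cases vs2) (auto simp: admissible_order_def)
    have "vs1 \<noteq> []" using vs1 AB(6) by (auto simp: admissible_order_def)
    then have "hd (filter (\<lambda>x. x \<noteq> a) vs1 @ t) = w" using vs1(2) AB(6) by (cases vs1) auto
    then show ?thesis using admissible_order_esum[OF mg AB(3,5) vs1(1) vs2] by blast
  qed
  have "\<exists>vs. admissible_order k (esum_V V1 V2 v1 v2) (esum_E E1 E2 v1 v2 P) vs \<and> hd vs = w"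
    if "w \<in> esum_V V1 V2 v1 v2" for w
    using that root_left[OF assms(1-3,5) eb] root_left[OF assms(2,1) _ assms(4) edge_bij_swap[OF eb]]
      assms(3) esum_V_swap[of V1 V2 v1 v2] esum_E_swap[of E1 E2 v1 v2 P]
    by (auto simp: esum_V_def Int_commute)
  then show ?thesis
    using assms mgraph_esum[OF _ _ assms(3) eb] by (simp add: rooted_admissible_def)
qed

lemma rooted_admissible_if_in_Asum: "in_Asum k V E \<Longrightarrow> rooted_admissible k V E"
  by (induction rule: in_Asum.induct)
    (auto intro: rooted_admissible_if_in_A rooted_admissible_image rooted_admissible_union
      rooted_admissible_esum)


lemma edge_adm_le_if_in_Asum:
  assumes "in_Asum k V E"
  shows "edge_adm V E \<le> k"
proof -
  have "rooted_admissible k V E" using assms by (rule rooted_admissible_if_in_Asum)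
  then show ?thesis
    using edge_adm_le_iff_admissible_order rooted_admissible_ex_admissible_order
    unfolding rooted_admissible_def by blast
qed

section \<open>Splitting along a minimum separating set\<close>

definition contract :: "'a uprod multiset \<Rightarrow> 'a set \<Rightarrow> 'a \<Rightarrow> 'a uprod multiset" where
  "contract E X c = image_mset (map_uprod (\<lambda>x. if x \<in> X then c else x))
     (filter_mset (\<lambda>e. \<not> set_uprod e \<subseteq> X) E)"

lemma mgraph_contract:
  assumes "mgraph V E" "c \<notin> V"
  shows "mgraph ((V - X) \<union> {c}) (contract E X c)"
  unfolding mgraph_def
proof (rule conjI[OF _ ballI])
  show "finite ((V - X) \<union> {c})" using assms(1) by (simp add: mgraph_def)
next
  fix e' assume "e' \<in># contract E X c"
  then obtain a b where "e' = map_uprod (\<lambda>x. if x \<in> X then c else x) (Upair a b)"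
      "\<not> {a, b} \<subseteq> X" "a \<noteq> b" "a \<in> V" "b \<in> V"
    unfolding contract_def using mgraph_edge[OF assms(1)] by fastforce
  then show "proper_uprod e' \<and> set_uprod e' \<subseteq> (V - X) \<union> {c}" using assms(2) by auto
qed

lemma cut_size_contract:
  assumes "mgraph V E" "c \<notin> V"
  shows "cut_size (contract E X c) Z = cut_size E ((Z - {c} - X) \<union> (if c \<in> Z then X else {}))"
  unfolding contract_def
  by (rule cut_size_image_filter) (use assms in \<open>auto simp: crosses_def dest!: mgraph_edge\<close>)

lemma inc_edges_contract:
  assumes "mgraph V E" "c \<notin> V"
  shows "inc_edges (contract E X c) c
    = image_mset (map_uprod (\<lambda>x. if x \<in> X then c else x)) (filter_mset (crosses X) E)"
  unfolding inc_edges_def contract_def filter_mset_image_mset filter_filter_mset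
  by (rule arg_cong[where f="image_mset _"], rule filter_mset_cong)
    (use assms in \<open>auto dest!: mgraph_edge\<close>)

lemma deg_contract: "mgraph V E \<Longrightarrow> c \<notin> V \<Longrightarrow> deg (contract E X c) c = cut_size E X"
  by (simp add: deg_def inc_edges_contract cut_size_def)

lemma contract_diff_inc_edges:
  assumes "mgraph V E" "c \<notin> V"
  shows "contract E X c - inc_edges (contract E X c) c = induced E (V - X)"
proof -
  let ?f = "\<lambda>x. if x \<in> X then c else x"
  have "contract E X c - inc_edges (contract E X c) c
      = image_mset (map_uprod ?f) (filter_mset (\<lambda>e. set_uprod e \<subseteq> V - X) E)"
    unfolding diff_inc_edges contract_def filter_mset_image_mset filter_filter_mset
    by (rule arg_cong[where f="image_mset _"], rule filter_mset_cong)
      (use assms in \<open>auto dest!: mgraph_edge\<close>)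
  also have "\<dots> = image_mset id (filter_mset (\<lambda>e. set_uprod e \<subseteq> V - X) E)"
    by (rule image_mset_cong) (case_tac x, auto)
  finally show ?thesis by (simp add: induced_def)
qed

lemma admissible_order_induced:
  assumes adm: "admissible_order k V E vs" and "X \<subseteq> V"
  shows "admissible_order k X (induced E X) (filter (\<lambda>x. x \<in> X) vs)"
  unfolding admissible_order_def
proof (intro conjI ballI)
  show "distinct (filter (\<lambda>x. x \<in> X) vs)" "set (filter (\<lambda>x. x \<in> X) vs) = X"
    using adm assms(2) by (auto simp: admissible_order_def)
  fix x assume "x \<in> set (filter (\<lambda>x. x \<in> X) vs)"
  then obtain W where W: "separating_set vs V x W" "cut_size E W \<le> k" "x \<in> X"
    using adm by (auto simp: admissible_order_def)
  have "separating_set (filter (\<lambda>x. x \<in> X) vs) X x (W \<inter> X)"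
    using W by (auto simp: separating_set_def dest: before_filterD)
  moreover have "cut_size (induced E X) (W \<inter> X) \<le> cut_size E W"
  proof -
    have "filter_mset (crosses (W \<inter> X)) (induced E X) \<subseteq># filter_mset (crosses W) E"
      unfolding induced_def by (rule filter_mset_mono_strong) (auto simp: crosses_def)
    then show ?thesis unfolding cut_size_def by (rule size_mset_mono)
  qed
  ultimately show "\<exists>Z. separating_set (filter (\<lambda>x. x \<in> X) vs) X x Z \<and> cut_size (induced E X) Z \<le> k"
    using W(2) by (meson le_trans)
qed


definition min_separating_set ::
    "'a list \<Rightarrow> 'a set \<Rightarrow> 'a uprod multiset \<Rightarrow> 'a \<Rightarrow> 'a set \<Rightarrow> bool" where
  "min_separating_set vs V E x X \<longleftrightarrow> separating_set vs V x X \<and>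
     (\<forall>Y. separating_set vs V x Y \<longrightarrow> cut_size E X \<le> cut_size E Y)"

lemma min_separating_set_uncross_inter:
  assumes "min_separating_set vs V E xi X" "separating_set vs V xi (W \<union> X)"
  shows "cut_size E (W \<inter> X) \<le> cut_size E W"
  using assms cut_size_submodular[of E W X] unfolding min_separating_set_def by fastforce

lemma min_separating_set_uncross_union:
  assumes "min_separating_set vs V E xi X" "separating_set vs V xi (W \<inter> X)"
  shows "cut_size E (W \<union> X) \<le> cut_size E W"
  using assms cut_size_submodular[of E W X] unfolding min_separating_set_def by fastforce

lemma min_separating_set_uncross_diff:
  assumes "min_separating_set vs V E xi X" "separating_set vs V xi (X - W)"
  shows "cut_size E (W - X) \<le> cut_size E W"
  using assms cut_size_posimodular[of E W X] unfolding min_separating_set_def by fastforce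

lemma before_if_separating_set:
  assumes "distinct vs" "separating_set vs (set vs) xi X" "x \<in> X" "before vs y xi"
  shows "before vs y x"
proof (cases "x = xi")
  case False
  have "x \<in> set vs" "xi \<in> set vs" using assms(2,3) by (auto simp: separating_set_def)
  moreover have "\<not> before vs x xi" using assms(2,3) by (auto simp: separating_set_def)
  ultimately have "before vs xi x" using before_total[OF assms(1)] False by blast
  then show ?thesis using before_trans[OF assms(1,4)] by blast
qed (use assms in simp)

text \<open>A set W cutting off a vertex of X is replaced by W \<inter> X; uncrossing with the minimum
  set X does not increase its boundary.\<close>

lemma admissible_order_contract_compl:
  assumes mg: "mgraph V E" and adm: "admissible_order k V E vs"
    and X: "min_separating_set vs V E xi X" and d: "d \<notin> V"
  shows "admissible_order k (X \<union> {d}) (contract E (V - X) d) (d # filter (\<lambda>x. x \<in> X) vs)"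
  unfolding admissible_order_def
proof (intro conjI ballI)
  have vs: "distinct vs" "set vs = V" using adm by (auto simp: admissible_order_def)
  have sepX: "separating_set vs V xi X" using X by (simp add: min_separating_set_def)
  then show "distinct (d # filter (\<lambda>x. x \<in> X) vs)" "set (d # filter (\<lambda>x. x \<in> X) vs) = X \<union> {d}"
    using vs d by (auto simp: separating_set_def)
  fix x assume "x \<in> set (d # filter (\<lambda>x. x \<in> X) vs)"
  then consider "x = d" | "x \<in> X" by auto
  then show "\<exists>Z. separating_set (d # filter (\<lambda>x. x \<in> X) vs) (X \<union> {d}) x Z
      \<and> cut_size (contract E (V - X) d) Z \<le> k"
  proof cases
    case 1
    have "\<not> before (d # filter (\<lambda>x. x \<in> X) vs) y d" for y
      by (rule not_before_hd) (use vs d sepX in \<open>auto simp: separating_set_def\<close>)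
    then have "separating_set (d # filter (\<lambda>x. x \<in> X) vs) (X \<union> {d}) x (X \<union> {d})"
      using 1 by (simp add: separating_set_def)
    moreover have "cut_size (contract E (V - X) d) (X \<union> {d}) = 0"
      using cut_size_vertex_set[OF mgraph_contract[OF mg d, of "V - X"]] sepX
      by (auto simp: separating_set_def double_diff)
    ultimately show ?thesis by auto
  next
    case 2
    have "x \<in> set vs" using 2 sepX vs by (auto simp: separating_set_def)
    then obtain W where W: "separating_set vs V x W" "cut_size E W \<le> k"
      using adm unfolding admissible_order_def by blast
    have "separating_set vs V xi (W \<union> X)"
      using sepX W(1) before_if_separating_set[OF vs(1) _ 2] vs
      by (auto simp: separating_set_def)
    then have "cut_size E (W \<inter> X) \<le> k"
      using min_separating_set_uncross_inter[OF X] W(2) by fastforce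
    moreover have "cut_size (contract E (V - X) d) (W \<inter> X) = cut_size E (W \<inter> X)"
      using cut_size_contract[OF mg d] W(1) d by (auto simp: separating_set_def intro!: arg_cong2[where f=cut_size])
    moreover have "separating_set (d # filter (\<lambda>x. x \<in> X) vs) (X \<union> {d}) x (W \<inter> X)"
      using W(1) 2 d by (auto simp: separating_set_def before_Cons dest: before_filterD)
    ultimately show ?thesis by auto
  qed
qed

text \<open>Read back in G, the set below is W \<union> X if xi \<in> W and W - X otherwise.\<close>

lemma cut_size_contract_min_separating_set:
  assumes mg: "mgraph V E" and X: "min_separating_set vs V E xi X" and c: "c \<notin> V"
    and W: "W \<subseteq> V"
  shows "cut_size (contract E X c) ((W - X) \<union> (if xi \<in> W then {c} else {})) \<le> cut_size E W"
proof -
  have sepX: "separating_set vs V xi X" using X by (simp add: min_separating_set_def)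
  have "c \<notin> W" using W c by auto
  then have "cut_size (contract E X c) ((W - X) \<union> (if xi \<in> W then {c} else {}))
      = cut_size E (if xi \<in> W then W \<union> X else W - X)"
    unfolding cut_size_contract[OF mg c] by (auto intro!: arg_cong2[where f=cut_size])
  also have "\<dots> \<le> cut_size E W"
  proof (cases "xi \<in> W")
    case True
    then have "separating_set vs V xi (W \<inter> X)" using sepX by (auto simp: separating_set_def)
    then show ?thesis using True min_separating_set_uncross_union[OF X] by simp
  next
    case False
    then have "separating_set vs V xi (X - W)" using sepX by (auto simp: separating_set_def)
    then show ?thesis using False min_separating_set_uncross_diff[OF X] by simp
  qed
  finally show ?thesis .
qed

lemma admissible_order_contract:
  assumes mg: "mgraph V E" and adm: "admissible_order k V E vs"
    and X: "min_separating_set vs V E xi X" and c: "c \<notin> V"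
  shows "admissible_order k ((V - X) \<union> {c}) (contract E X c)
           (map (\<lambda>x. if x = xi then c else x) (filter (\<lambda>x. x \<notin> X \<or> x = xi) vs))"
proof -
  have vs: "distinct vs" "set vs = V" using adm by (auto simp: admissible_order_def)
  have sepX: "separating_set vs V xi X" using X by (simp add: min_separating_set_def)
  then have xi: "xi \<in> V" "xi \<in> X" "X \<subseteq> V" by (auto simp: separating_set_def)
  define h where "h = (\<lambda>x. if x = xi then c else x)"
  define L where "L = filter (\<lambda>x. x \<notin> X \<or> x = xi) vs"
  have L: "set L = (V - X) \<union> {xi}" "distinct L" using vs xi by (auto simp: L_def)
  have inj: "inj_on h (set L)" unfolding inj_on_def h_def using L c xi by auto
  have "\<exists>Z. separating_set (map h L) ((V - X) \<union> {c}) x' Z \<and> cut_size (contract E X c) Z \<le> k"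
    if x': "x' \<in> set (map h L)" for x'
  proof -
    obtain x where x: "x \<in> set L" "x' = h x" using x' by auto
    obtain W where W: "separating_set vs V x W" "cut_size E W \<le> k"
      using adm x vs by (auto simp: admissible_order_def L_def)
    define Z where "Z = (W - X) \<union> (if xi \<in> W then {c} else {})"
    have "W \<subseteq> V" using W(1) by (simp add: separating_set_def)
    then have "cut_size (contract E X c) Z \<le> k"
      using cut_size_contract_min_separating_set[OF mg X c] W(2) unfolding Z_def by (meson le_trans)
    moreover have "separating_set (map h L) ((V - X) \<union> {c}) x' Z"
      unfolding separating_set_def
    proof (intro conjI allI impI)
      show "Z \<subseteq> (V - X) \<union> {c}" using W(1) by (auto simp: Z_def separating_set_def)
      show "x' \<in> Z" using x W(1) by (auto simp: Z_def h_def L_def separating_set_def)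
      fix y' assume "before (map h L) y' x'"
      then obtain y z where yz: "h y = y'" "h z = x'" "before L y z" by (auto dest: before_mapD)
      then have "y \<in> set L" "z = x" using x inj before_in_set[OF yz(3)] by (auto dest: inj_onD)
      then have "before vs y x" "y \<in> V" using yz(3) L vs by (auto simp: L_def dest: before_filterD)
      then show "y' \<notin> Z"
        using W(1) yz(1) c by (auto simp: Z_def h_def separating_set_def split: if_splits)
    qed
    ultimately show ?thesis by blast
  qed
  moreover have "distinct (map h L)" "set (map h L) = (V - X) \<union> {c}"
    using L inj xi by (auto simp: distinct_map h_def)
  ultimately show ?thesis unfolding admissible_order_def h_def[symmetric] L_def[symmetric] by blast
qed

lemma ex_min_separating_set:
  assumes "admissible_order k V E vs" "x \<in> V"
  obtains X where "min_separating_set vs V E x X" "cut_size E X \<le> k"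
proof -
  obtain W where W: "separating_set vs V x W" "cut_size E W \<le> k"
    using assms unfolding admissible_order_def by blast
  then obtain X where "separating_set vs V x X"
      "\<And>Y. separating_set vs V x Y \<Longrightarrow> cut_size E X \<le> cut_size E Y"
    using ex_has_least_nat[of "separating_set vs V x" W "cut_size E"] by blast
  then show ?thesis using that W by (meson le_trans min_separating_set_def)
qed

lemma two_le_card:
  assumes "finite A" "a \<in> A" "A \<noteq> {a}"
  shows "2 \<le> card A"
proof -
  obtain b where "b \<in> A" "b \<noteq> a" using assms(2,3) by blast
  then have "card {a, b} \<le> card A" using assms(1,2) by (intro card_mono) auto
  then show ?thesis using \<open>b \<noteq> a\<close> by simp
qed

text \<open>If G is not in A_k, let h before xi be two vertices of degree larger than k. A minimum
  set separating xi from its predecessors is neither {xi} nor the complement of {h}.\<close>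

lemma ex_balanced_min_separating_set:
  assumes mg: "mgraph V E" and adm: "admissible_order k V E vs" and "\<not> in_A k V E"
  obtains xi X where "min_separating_set vs V E xi X" "cut_size E X \<le> k"
    "2 \<le> card X" "2 \<le> card (V - X)"
proof -
  obtain a b where ab: "a \<in> V" "b \<in> V" "a \<noteq> b" "k < deg E a" "k < deg E b"
    using assms(3) mg unfolding in_A_def by (metis not_le)
  then obtain h xi where hxi: "h \<in> V" "xi \<in> V" "k < deg E h" "k < deg E xi" "before vs h xi"
    using before_total[of vs a b] adm by (auto simp: admissible_order_def)
  obtain X where X: "min_separating_set vs V E xi X" "cut_size E X \<le> k"
    using ex_min_separating_set[OF adm hxi(2)] .
  then have sepX: "X \<subseteq> V" "xi \<in> X" "h \<notin> X"
    using hxi(5) by (auto simp: min_separating_set_def separating_set_def)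
  have fin: "finite V" "finite X" using mg sepX(1) by (auto simp: mgraph_def intro: finite_subset)
  have "X \<noteq> {xi}"
  proof
    assume "X = {xi}"
    then show False using X(2) hxi(4) cut_size_singleton[OF mg, of xi] by simp
  qed
  moreover have "V - X \<noteq> {h}"
  proof
    assume "V - X = {h}"
    then show False using X(2) hxi(3) cut_size_singleton[OF mg, of h] cut_size_Diff[OF mg, of X] by simp
  qed
  ultimately have "2 \<le> card X" "2 \<le> card (V - X)"
    using two_le_card[of X xi] two_le_card[of "V - X" h] fin sepX hxi(1) by auto
  then show ?thesis using that X by blast
qed

text \<open>The bijection pairs the two images of each edge crossing X.\<close>

lemma esum_contract:
  assumes mg: "mgraph V E" and XV: "X \<subseteq> V" and cd: "c \<notin> V" "d \<notin> V"
  obtains P where "edge_bij P (inc_edges (contract E X c) c) (inc_edges (contract E (V - X) d) d)"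
    "esum_E (contract E X c) (contract E (V - X) d) c d P = E"
proof -
  let ?f = "\<lambda>x. if x \<in> X then c else x"
  let ?g = "\<lambda>x. if x \<in> V - X then d else x"
  let ?C = "filter_mset (crosses X) E"
  define P where "P = image_mset (\<lambda>e. (map_uprod ?f e, map_uprod ?g e)) ?C"
  have "filter_mset (crosses (V - X)) E = ?C"
    by (rule filter_mset_cong) (auto dest!: mgraph_edge[OF mg])
  then have "edge_bij P (inc_edges (contract E X c) c) (inc_edges (contract E (V - X) d) d)"
    unfolding edge_bij_def P_def inc_edges_contract[OF mg cd(1)] inc_edges_contract[OF mg cd(2)]
    by (simp add: multiset.map_comp o_def)
  moreover have "image_mset (\<lambda>(e, f). Upair (other_end c e) (other_end d f)) P = ?C"
  proof -
    have "image_mset (\<lambda>(e, f). Upair (other_end c e) (other_end d f)) P = image_mset id ?C"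
      unfolding P_def multiset.map_comp
    proof (rule image_mset_cong)
      fix e assume "e \<in># ?C"
      then have "crosses X e" "e \<in># E" by auto
      then obtain a b where e: "e = Upair a b" "a \<in> X" "b \<notin> X" by (elim crossesE)
      moreover have "b \<in> V" using mgraph_edge[OF mg \<open>e \<in># E\<close>] e by auto
      ultimately show "((\<lambda>(e, f). Upair (other_end c e) (other_end d f))
          \<circ> (\<lambda>e. (map_uprod ?f e, map_uprod ?g e))) e = id e"
        by auto
    qed
    then show ?thesis by simp
  qed
  moreover have "esum_E (contract E X c) (contract E (V - X) d) c d P
      = induced E (V - X) + induced E X + image_mset (\<lambda>(e, f). Upair (other_end c e) (other_end d f)) P"
    using contract_diff_inc_edges[OF mg cd(1)] contract_diff_inc_edges[OF mg cd(2), of "V - X"] XV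
    by (simp add: esum_E_def double_diff)
  ultimately show ?thesis using that induced_add_cut_edges[OF mg XV] by metis
qed

lemma in_Asum_union_induced:
  assumes mg: "mgraph V E" and XV: "X \<subseteq> V" and "cut_size E X = 0"
    and "in_Asum k (V - X) (induced E (V - X))" "in_Asum k X (induced E X)"
  shows "in_Asum k V E"
proof -
  have "in_Asum k ((V - X) \<union> X) (induced E (V - X) + induced E X)"
    using assms(4,5) by (rule in_Asum.union) auto
  moreover have "filter_mset (crosses X) E = {#}" using assms(3) unfolding cut_size_def by simp
  then have "induced E (V - X) + induced E X = E"
    using induced_add_cut_edges[OF mg XV] by (metis add.right_neutral)
  ultimately show ?thesis using XV by (simp add: Un_absorb2)
qed

lemma in_Asum_esum_contract:
  assumes mg: "mgraph V E" and XV: "X \<subseteq> V" and "0 < cut_size E X" "cut_size E X \<le> k"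
    and cd: "c \<notin> V" "d \<notin> V" "c \<noteq> d"
    and "in_Asum k ((V - X) \<union> {c}) (contract E X c)" "in_Asum k (X \<union> {d}) (contract E (V - X) d)"
  shows "in_Asum k V E"
proof -
  obtain P where P:
    "edge_bij P (inc_edges (contract E X c) c) (inc_edges (contract E (V - X) d) d)"
    "esum_E (contract E X c) (contract E (V - X) d) c d P = E"
    using esum_contract[OF mg XV cd(1,2)] .
  have deg: "deg (contract E X c) c = cut_size E X" "deg (contract E (V - X) d) d = cut_size E X"
    using deg_contract[OF mg cd(1)] deg_contract[OF mg cd(2)] cut_size_Diff[OF mg] by auto
  have "in_Asum k (esum_V ((V - X) \<union> {c}) (X \<union> {d}) c d) E"
    using in_Asum.esum[OF assms(8,9) _ _ _ deg _ assms(4) P(1)] P(2) assms(3) cd XV by auto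
  moreover have "esum_V ((V - X) \<union> {c}) (X \<union> {d}) c d = V"
    using cd XV by (auto simp: esum_V_def)
  ultimately show ?thesis by simp
qed

lemma in_Asum_if_admissible_order:
  fixes V :: "nat set"
  assumes "mgraph V E" "admissible_order k V E vs"
  shows "in_Asum k V E"
  using assms
proof (induction "card V" arbitrary: V E vs rule: less_induct)
  case less
  note mg = less.prems(1) and adm = less.prems(2)
  show ?case
  proof (cases "in_A k V E")
    case True
    then show ?thesis by (rule in_Asum.base)
  next
    case False
    then obtain xi X where X: "min_separating_set vs V E xi X" "cut_size E X \<le> k"
        "2 \<le> card X" "2 \<le> card (V - X)"
      using ex_balanced_min_separating_set[OF mg adm] by blast
    have XV: "X \<subseteq> V" using X(1) by (simp add: min_separating_set_def separating_set_def)
    have fin: "finite (V - X)" "finite X" using mg XV by (auto simp: mgraph_def finite_subset)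
    have card_V: "card V = card (V - X) + card X"
      using fin XV card_Diff_subset[of X V] card_mono[of V X] by (auto simp: finite_Diff2)
    show ?thesis
    proof (cases "cut_size E X = 0")
      case True
      have "V - X \<subseteq> V" by blast
      then have "in_Asum k (V - X) (induced E (V - X))"
        using less.hyps[OF _ mgraph_induced[OF mg] admissible_order_induced[OF adm]] card_V X(3)
        by simp
      moreover have "in_Asum k X (induced E X)"
        using less.hyps[OF _ mgraph_induced[OF mg XV] admissible_order_induced[OF adm XV]] card_V X(4)
        by simp
      ultimately show ?thesis using in_Asum_union_induced[OF mg XV True] by blast
    next
      case False
      obtain c d :: nat where cd: "c \<notin> V" "d \<notin> V" "c \<noteq> d"
        using ex_new_if_finite[OF infinite_UNIV_nat] mg
        by (metis finite_insert insertCI mgraph_def)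
      have "d \<notin> X" using cd XV by blast
      have "in_Asum k ((V - X) \<union> {c}) (contract E X c)"
        using less.hyps[OF _ mgraph_contract[OF mg cd(1)] admissible_order_contract[OF mg adm X(1) cd(1)]]
          card_V X(3) fin cd by simp
      moreover have "in_Asum k (X \<union> {d}) (contract E (V - X) d)"
        using less.hyps[of "X \<union> {d}"] card_V X(4) fin \<open>d \<notin> X\<close> XV
          mgraph_contract[OF mg cd(2), of "V - X"] admissible_order_contract_compl[OF mg adm X(1) cd(2)]
        by (simp add: double_diff)
      ultimately show ?thesis
        using in_Asum_esum_contract[OF mg XV _ X(2) cd] False by simp
    qed
  qed
qed

theorem mainTheorem5:
  shows "(\<forall>(k::nat) (V::nat set) E. mgraph V E \<longrightarrow> edge_adm V E \<le> k \<longrightarrow> in_Asum k V E)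
       \<and> (\<forall>(k::nat) (V::nat set) E. k \<ge> 1 \<longrightarrow> in_Asum k V E \<longrightarrow> edge_adm V E \<le> 2 * k - 1)"
proof (intro conjI allI impI)
  fix k :: nat and V :: "nat set" and E
  assume "mgraph V E" "edge_adm V E \<le> k"
  then obtain vs where "admissible_order k V E vs"
    using edge_adm_le_iff_admissible_order by blast
  then show "in_Asum k V E" using in_Asum_if_admissible_order \<open>mgraph V E\<close> by blast
next
  fix k :: nat and V :: "nat set" and E
  assume "k \<ge> 1" "in_Asum k V E"
  then have "edge_adm V E \<le> k" by (simp add: edge_adm_le_if_in_Asum)
  then show "edge_adm V E \<le> 2 * k - 1" using \<open>k \<ge> 1\<close> by linarith
qed

end
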